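(* Let $k\ge 2$ be an integer. There exists a combinatorial auction (with bids equal to the true valuations) whose winner set $W$ has $|W|=k$ and which has a unique MRC outcome $\pi^{MRC}$, such that $\pi^{MRC}$ gives utility $0$ to exactly $k-2$ winners, while for each of these $k-2$ winners $i$ there exists a core outcome $\pi\in U$ with $\pi_i>0$.
   Context: A combinatorial auction (CA) has a finite set of bidders $N=\{1,\dots,n\}$, a finite set of items $M$, and for each bidder $i$ a valuation $v_i:2^M\to\mathbb{R}_{\ge 0}$ with $v_i(\emptyset)=0$. For $S\subseteq N$ let $w(S)=\max\{\sum_{i\in S}v_i(a_i): a_i\subseteq M,\ a_i\cap a_j=\emptyset\ (i\ne j)\}$ (with $w(\emptyset)=0$). Fix an allocation $(a^*_i)_{i\in N}$ attaining $w(N)$; the winner set is $W=\{i: a^*_i\neq\emptyset\}$. A utility outcome is a vector $\pi\in\mathbb{R}^N$ (bidder $i$ pays $v_i(a^*_i)-\pi_i$). The core is $U=\{\pi\in\mathbb{R}^N:\ \pi_i\ge 0\ \forall i\in N,\ \sum_{i\in N\setminus S}\pi_i\le w(N)-w(S)\ \forall S\subseteq N\}$. An MRC (minimum-revenue-core) outcome is a $\pi\in U$ maximizing $\sum_{i\in N}\pi_i$ over $U$. *)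

theory Defs
  imports Complex_Main
begin

definition is_valuation :: "nat set \<Rightarrow> nat set \<Rightarrow> (nat \<Rightarrow> nat set \<Rightarrow> real) \<Rightarrow> bool" where
  "is_valuation N M v \<longleftrightarrow> (\<forall>i\<in>N. v i {} = 0 \<and> (\<forall>X. X \<subseteq> M \<longrightarrow> v i X \<ge> 0))"

definition feasible_alloc :: "nat set \<Rightarrow> nat set \<Rightarrow> (nat \<Rightarrow> nat set) \<Rightarrow> bool" where
  "feasible_alloc M S a \<longleftrightarrow> (\<forall>i\<in>S. a i \<subseteq> M) \<and> (\<forall>i\<in>S. \<forall>j\<in>S. i \<noteq> j \<longrightarrow> a i \<inter> a j = {})"

definition wval :: "nat set \<Rightarrow> (nat \<Rightarrow> nat set \<Rightarrow> real) \<Rightarrow> nat set \<Rightarrow> real" where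
  "wval M v S = Max {(\<Sum>i\<in>S. v i (a i)) | a. feasible_alloc M S a}"

definition efficient_alloc :: "nat set \<Rightarrow> nat set \<Rightarrow> (nat \<Rightarrow> nat set \<Rightarrow> real) \<Rightarrow> (nat \<Rightarrow> nat set) \<Rightarrow> bool" where
  "efficient_alloc N M v a \<longleftrightarrow> feasible_alloc M N a \<and> (\<Sum>i\<in>N. v i (a i)) = wval M v N"

definition winners :: "nat set \<Rightarrow> (nat \<Rightarrow> nat set) \<Rightarrow> nat set" where
  "winners N a = {i\<in>N. a i \<noteq> {}}"

(* core; utility vectors in R^N are represented as functions vanishing outside N *)
definition core :: "nat set \<Rightarrow> nat set \<Rightarrow> (nat \<Rightarrow> nat set \<Rightarrow> real) \<Rightarrow> (nat \<Rightarrow> real) set" where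
  "core N M v = {\<pi>. (\<forall>i. i \<notin> N \<longrightarrow> \<pi> i = 0) \<and> (\<forall>i\<in>N. \<pi> i \<ge> 0) \<and>
      (\<forall>S. S \<subseteq> N \<longrightarrow> (\<Sum>i\<in>N - S. \<pi> i) \<le> wval M v N - wval M v S)}"

definition is_MRC :: "nat set \<Rightarrow> nat set \<Rightarrow> (nat \<Rightarrow> nat set \<Rightarrow> real) \<Rightarrow> (nat \<Rightarrow> real) \<Rightarrow> bool" where
  "is_MRC N M v \<pi> \<longleftrightarrow> \<pi> \<in> core N M v \<and> (\<forall>\<pi>'\<in>core N M v. (\<Sum>i\<in>N. \<pi>' i) \<le> (\<Sum>i\<in>N. \<pi> i))"

end

theory Submission
  imports Defs "HOL-Library.FuncSet" "HOL-Library.Indicator_Function"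
begin

text \<open>
  Take k single-item bidders 0, ..., k-1, bidder i valuing item i at 2, and two large bidders
  k and k+1 valuing all items except item 1 (resp. except item 0) at 2k - 3. Each large bidder
  can block with the one small bidder it does not conflict with, which forces
  \<open>\<pi> 0 + (\<Sum>i\<in>{2..<k}. \<pi> i) \<le> 1\<close> and \<open>\<pi> 1 + (\<Sum>i\<in>{2..<k}. \<pi> i) \<le> 1\<close>. So the
  total utility is at most 2, with equality only for \<open>\<pi> 0 = \<pi> 1 = 1\<close> and all other utilities 0,
  while giving 1/2 to bidders 0, 1 and any one i \<ge> 2 is still in the core.
\<close>

lemma finite_alloc_values:
  assumes "finite M" "finite S"
  shows "finite {(\<Sum>i\<in>S. v i (a i)) | a. feasible_alloc M S a}"
proof -
  have "{(\<Sum>i\<in>S. v i (a i)) | a. feasible_alloc M S a}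
        \<subseteq> (\<lambda>b. \<Sum>i\<in>S. v i (b i)) ` Pi\<^sub>E S (\<lambda>_. Pow M)"
  proof
    fix x assume "x \<in> {(\<Sum>i\<in>S. v i (a i)) | a. feasible_alloc M S a}"
    then obtain a where x: "x = (\<Sum>i\<in>S. v i (a i))" and a: "feasible_alloc M S a" by blast
    have "restrict a S \<in> Pi\<^sub>E S (\<lambda>_. Pow M)" using a unfolding feasible_alloc_def by auto
    moreover have "x = (\<Sum>i\<in>S. v i (restrict a S i))" using x by simp
    ultimately show "x \<in> (\<lambda>b. \<Sum>i\<in>S. v i (b i)) ` Pi\<^sub>E S (\<lambda>_. Pow M)" by blast
  qed
  moreover have "finite (Pi\<^sub>E S (\<lambda>_. Pow M))" using assms by (simp add: finite_PiE)
  ultimately show ?thesis by (meson finite_imageI finite_subset)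
qed

lemma alloc_value_le_wval:
  assumes "finite M" "finite S" "feasible_alloc M S a"
  shows "(\<Sum>i\<in>S. v i (a i)) \<le> wval M v S"
  unfolding wval_def using finite_alloc_values[OF assms(1,2), of v] assms(3)
  by (intro Max_ge) auto

lemma wval_le:
  assumes "finite M" "finite S" "\<And>a. feasible_alloc M S a \<Longrightarrow> (\<Sum>i\<in>S. v i (a i)) \<le> x"
  shows "wval M v S \<le> x"
proof -
  have "feasible_alloc M S (\<lambda>_. {})" unfolding feasible_alloc_def by auto
  then show ?thesis unfolding wval_def using finite_alloc_values[OF assms(1,2), of v] assms(3)
    by (subst Max_le_iff) auto
qed

definition single_minded :: "(nat \<Rightarrow> nat set) \<Rightarrow> (nat \<Rightarrow> real) \<Rightarrow> nat \<Rightarrow> nat set \<Rightarrow> real" where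
  "single_minded B c i X = (if B i \<subseteq> X then c i else 0)"

lemma packing_value_le_wval:
  assumes "finite M" "finite S" "T \<subseteq> S" "feasible_alloc M T B" "\<And>i. i \<in> S \<Longrightarrow> c i \<ge> 0"
  shows "sum c T \<le> wval M (single_minded B c) S"
proof -
  define a where "a i = (if i \<in> T then B i else {})" for i
  have "feasible_alloc M S a"
    using assms(4) unfolding feasible_alloc_def a_def by auto
  have "sum c T = (\<Sum>i\<in>S. if i \<in> T then c i else 0)"
    using assms(2,3) by (simp add: sum.inter_restrict[symmetric] Int_absorb1)
  also have "\<dots> \<le> (\<Sum>i\<in>S. single_minded B c i (a i))"
    using assms(5) by (intro sum_mono) (auto simp: single_minded_def a_def)
  also have "\<dots> \<le> wval M (single_minded B c) S"
    by (rule alloc_value_le_wval) fact+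
  finally show ?thesis .
qed

lemma wval_single_minded_le:
  assumes "finite M" "finite S"
    and "\<And>T. T \<subseteq> S \<Longrightarrow> feasible_alloc M T B \<Longrightarrow> sum c T \<le> x"
  shows "wval M (single_minded B c) S \<le> x"
proof (rule wval_le[OF assms(1,2)])
  fix a assume a: "feasible_alloc M S a"
  define T where "T = {i\<in>S. B i \<subseteq> a i}"
  have "feasible_alloc M T B"
    using a unfolding feasible_alloc_def T_def by blast
  moreover have "(\<Sum>i\<in>S. single_minded B c i (a i)) = sum c T"
    unfolding T_def single_minded_def using assms(2) by (simp add: sum.inter_filter)
  ultimately show "(\<Sum>i\<in>S. single_minded B c i (a i)) \<le> x"
    using assms(3) T_def by auto
qed

lemma core_single_minded_iff:
  assumes "finite N" "finite M" "\<And>i. i \<in> N \<Longrightarrow> c i \<ge> 0"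
  shows "\<pi> \<in> core N M (single_minded B c) \<longleftrightarrow>
    (\<forall>i. i \<notin> N \<longrightarrow> \<pi> i = 0) \<and> (\<forall>i\<in>N. \<pi> i \<ge> 0) \<and>
    (\<forall>T\<subseteq>N. feasible_alloc M T B \<longrightarrow>
       sum c T + (\<Sum>i\<in>N - T. \<pi> i) \<le> wval M (single_minded B c) N)"
  (is "_ \<longleftrightarrow> ?out \<and> ?nonneg \<and> ?packings")
proof
  assume core: "\<pi> \<in> core N M (single_minded B c)"
  have ?packings
  proof (intro allI impI)
    fix T assume T: "T \<subseteq> N" "feasible_alloc M T B"
    have "sum c T \<le> wval M (single_minded B c) T"
      using T assms by (intro packing_value_le_wval) (auto intro: finite_subset)
    moreover have "(\<Sum>i\<in>N - T. \<pi> i) \<le> wval M (single_minded B c) N - wval M (single_minded B c) T"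
      using core T(1) unfolding core_def by blast
    ultimately show "sum c T + (\<Sum>i\<in>N - T. \<pi> i) \<le> wval M (single_minded B c) N"
      by linarith
  qed
  with core show "?out \<and> ?nonneg \<and> ?packings" unfolding core_def by blast
next
  assume "?out \<and> ?nonneg \<and> ?packings"
  then have out: ?out and nonneg: ?nonneg and packings: ?packings by blast+
  have "(\<Sum>i\<in>N - S. \<pi> i) \<le> wval M (single_minded B c) N - wval M (single_minded B c) S"
    if S: "S \<subseteq> N" for S
  proof -
    have "wval M (single_minded B c) S \<le> wval M (single_minded B c) N - (\<Sum>i\<in>N - S. \<pi> i)"
    proof (rule wval_single_minded_le[OF assms(2)])
      show "finite S" using S assms(1) by (rule finite_subset)
      fix T assume T: "T \<subseteq> S" "feasible_alloc M T B"
      have "(\<Sum>i\<in>N - S. \<pi> i) \<le> (\<Sum>i\<in>N - T. \<pi> i)"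
        using T nonneg assms(1) by (intro sum_mono2) auto
      moreover have "sum c T + (\<Sum>i\<in>N - T. \<pi> i) \<le> wval M (single_minded B c) N"
        using packings T S by blast
      ultimately show "sum c T \<le> wval M (single_minded B c) N - (\<Sum>i\<in>N - S. \<pi> i)"
        by linarith
    qed
    then show ?thesis by linarith
  qed
  with out nonneg show "\<pi> \<in> core N M (single_minded B c)" unfolding core_def by blast
qed

lemma packing_slack_mono:
  fixes c \<pi> :: "nat \<Rightarrow> real"
  assumes "finite N" "T \<subseteq> T'" "T' \<subseteq> N" "\<And>i. i \<in> T' - T \<Longrightarrow> \<pi> i \<le> c i"
  shows "sum c T + (\<Sum>i\<in>N - T. \<pi> i) \<le> sum c T' + (\<Sum>i\<in>N - T'. \<pi> i)"
proof -
  have fin: "finite T'" using finite_subset[OF assms(3,1)] .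
  have "sum c T' = sum c T + sum c (T' - T)"
    using sum.subset_diff[OF assms(2) fin, of c] by simp
  moreover have "(\<Sum>i\<in>N - T. \<pi> i) = (\<Sum>i\<in>N - T'. \<pi> i) + sum \<pi> (T' - T)"
  proof -
    have "N - T = (N - T') \<union> (T' - T)" "(N - T') \<inter> (T' - T) = {}" using assms(2,3) by auto
    then show ?thesis using assms(1) fin by (simp add: sum.union_disjoint)
  qed
  moreover have "sum \<pi> (T' - T) \<le> sum c (T' - T)" using assms(4) by (rule sum_mono)
  ultimately show ?thesis by linarith
qed

lemma sum_remove_two:
  assumes "finite N" "i \<in> N" "j \<in> N" "i \<noteq> j"
  shows "(\<Sum>x\<in>N. f x) = (\<Sum>x\<in>N - {i, j}. f x) + f i + (f j :: real)"
  using sum.subset_diff[of "{i, j}" N f] assms by simp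

definition auction_bundle :: "nat \<Rightarrow> nat \<Rightarrow> nat set" where
  "auction_bundle k i = (if i < k then {i} else if i = k then {..k} - {1} else {..k} - {0})"

definition auction_price :: "nat \<Rightarrow> nat \<Rightarrow> real" where
  "auction_price k i = (if i < k then 2 else 2 * real k - 3)"

definition auction_val :: "nat \<Rightarrow> nat \<Rightarrow> nat set \<Rightarrow> real" where
  "auction_val k = single_minded (auction_bundle k) (auction_price k)"

lemma auction_price_nonneg: "2 \<le> k \<Longrightarrow> auction_price k i \<ge> 0"
  unfolding auction_price_def by auto

lemma auction_packing_cases:
  assumes k: "2 \<le> k" and T: "T \<subseteq> {..k+1}" "feasible_alloc {..k} T (auction_bundle k)"
  shows "T \<subseteq> {..<k} \<or> T \<subseteq> {k, 1} \<or> T \<subseteq> {k+1, 0}"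
proof -
  have disj: "auction_bundle k i \<inter> auction_bundle k j = {}" if "i \<in> T" "j \<in> T" "i \<noteq> j" for i j
    using T(2) that unfolding feasible_alloc_def by blast
  have common: "x \<in> auction_bundle k i \<inter> auction_bundle k j \<Longrightarrow> i = j"
    if "i \<in> T" "j \<in> T" for i j x
    using disj[OF that] by blast
  have range: "j < k \<or> j = k \<or> j = k+1" if "j \<in> T" for j
    using T(1) that by fastforce
  have k_partner: "j \<in> {k, 1}" if "k \<in> T" "j \<in> T" for j
  proof -
    have "j = k \<or> j = 1 \<or> (if j = k+1 then k else j) \<in> auction_bundle k k \<inter> auction_bundle k j"
      using range[OF that(2)] k by (auto simp: auction_bundle_def)
    then show ?thesis using common[OF that(1,2)] by auto
  qed
  have k1_partner: "j \<in> {k+1, 0}" if "k+1 \<in> T" "j \<in> T" for j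
  proof -
    have "j = k+1 \<or> j = 0 \<or> (if j = k then k else j) \<in> auction_bundle k (k+1) \<inter> auction_bundle k j"
      using range[OF that(2)] k by (auto simp: auction_bundle_def)
    then show ?thesis using common[OF that(1,2)] by auto
  qed
  show ?thesis
  proof (cases "k \<in> T \<or> k+1 \<in> T")
    case True
    with k_partner k1_partner show ?thesis by blast
  next
    case False
    then have "T \<subseteq> {..<k}" using range by fastforce
    then show ?thesis by blast
  qed
qed

lemma auction_maximal_packings:
  assumes "2 \<le> k"
  shows "feasible_alloc {..k} {..<k} (auction_bundle k)"
    and "feasible_alloc {..k} {k, 1} (auction_bundle k)"
    and "feasible_alloc {..k} {k+1, 0} (auction_bundle k)"
  using assms unfolding feasible_alloc_def auction_bundle_def by auto

lemma auction_maximal_prices: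
  assumes "2 \<le> k"
  shows "sum (auction_price k) {..<k} = 2 * real k"
    and "sum (auction_price k) {k, 1} = 2 * real k - 1"
    and "sum (auction_price k) {k+1, 0} = 2 * real k - 1"
  using assms by (simp_all add: auction_price_def)

lemma auction_wval:
  assumes k: "2 \<le> k"
  shows "wval {..k} (auction_val k) {..k+1} = 2 * real k"
proof (rule antisym)
  show "wval {..k} (auction_val k) {..k+1} \<le> 2 * real k"
    unfolding auction_val_def
  proof (rule wval_single_minded_le)
    fix T assume T: "T \<subseteq> {..k+1}" "feasible_alloc {..k} T (auction_bundle k)"
    have mono: "sum (auction_price k) T \<le> sum (auction_price k) T'" if "T \<subseteq> T'" "finite T'" for T'
      using that auction_price_nonneg[OF k] by (intro sum_mono2) auto
    from auction_packing_cases[OF k T] show "sum (auction_price k) T \<le> 2 * real k"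
    proof (elim disjE)
      assume "T \<subseteq> {..<k}"
      with mono[of "{..<k}"] show ?thesis using auction_maximal_prices(1)[OF k] by simp
    next
      assume "T \<subseteq> {k, 1}"
      with mono[of "{k, 1}"] show ?thesis using auction_maximal_prices(2)[OF k] by simp
    next
      assume "T \<subseteq> {k+1, 0}"
      with mono[of "{k+1, 0}"] show ?thesis using auction_maximal_prices(3)[OF k] by simp
    qed
  qed simp_all
  show "2 * real k \<le> wval {..k} (auction_val k) {..k+1}"
  proof -
    have "sum (auction_price k) {..<k} \<le> wval {..k} (auction_val k) {..k+1}"
      unfolding auction_val_def using auction_price_nonneg[OF k]
      by (intro packing_value_le_wval auction_maximal_packings(1)[OF k]) auto
    then show ?thesis using auction_maximal_prices(1)[OF k] by simp
  qed
qed

lemma auction_utility_bound: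
  fixes \<pi> :: "nat \<Rightarrow> real"
  assumes k: "2 \<le> k" and nonneg: "\<forall>i\<in>{..k+1}. \<pi> i \<ge> 0" and large: "\<pi> k = 0" "\<pi> (k+1) = 0"
    and block_k: "(\<Sum>i\<in>{..k+1} - {k, 1}. \<pi> i) \<le> 1"
    and block_k1: "(\<Sum>i\<in>{..k+1} - {k+1, 0}. \<pi> i) \<le> 1"
  shows "(\<Sum>i\<in>{..k+1}. \<pi> i) \<le> 2"
    and "(\<Sum>i\<in>{..k+1}. \<pi> i) \<ge> 2 \<Longrightarrow> i \<in> {..k+1} \<Longrightarrow> \<pi> i = indicator {0, 1} i"
proof -
  let ?rest = "\<Sum>i\<in>{..k+1} - {0, 1}. \<pi> i"
  have "(\<Sum>i\<in>{..k+1}. \<pi> i) = (\<Sum>i\<in>{..k+1} - {k, 1}. \<pi> i) + \<pi> 1"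
    using sum_remove_two[of "{..k+1}" k 1 \<pi>] k large by simp
  moreover have "(\<Sum>i\<in>{..k+1}. \<pi> i) = (\<Sum>i\<in>{..k+1} - {k+1, 0}. \<pi> i) + \<pi> 0"
    using sum_remove_two[of "{..k+1}" "k+1" 0 \<pi>] large by simp
  moreover have total: "(\<Sum>i\<in>{..k+1}. \<pi> i) = ?rest + \<pi> 0 + \<pi> 1"
    using sum_remove_two[of "{..k+1}" 0 1 \<pi>] k by simp
  moreover have "?rest \<ge> 0"
    using nonneg by (intro sum_nonneg) auto
  ultimately have bound: "(\<Sum>i\<in>{..k+1}. \<pi> i) + ?rest \<le> 2" and "\<pi> 0 \<le> 1" "\<pi> 1 \<le> 1"
    using block_k block_k1 by linarith+
  with \<open>?rest \<ge> 0\<close> show "(\<Sum>i\<in>{..k+1}. \<pi> i) \<le> 2" by linarith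
  assume "(\<Sum>i\<in>{..k+1}. \<pi> i) \<ge> 2" and i: "i \<in> {..k+1}"
  with bound \<open>?rest \<ge> 0\<close> have "?rest = 0" by linarith
  with nonneg have "\<pi> j = 0" if "j \<in> {..k+1} - {0, 1}" for j
    using sum_nonneg_eq_0_iff[of "{..k+1} - {0, 1}" \<pi>] that by auto
  moreover have "\<pi> 0 = 1" "\<pi> 1 = 1"
    using total \<open>?rest = 0\<close> \<open>\<pi> 0 \<le> 1\<close> \<open>\<pi> 1 \<le> 1\<close> \<open>(\<Sum>i\<in>{..k+1}. \<pi> i) \<ge> 2\<close> by linarith+
  ultimately show "\<pi> i = indicator {0, 1} i" using i by (auto simp: indicator_def)
qed

lemma auction_utility_le_price:
  fixes \<pi> :: "nat \<Rightarrow> real"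
  assumes k: "2 \<le> k" and nonneg: "\<forall>i\<in>{..k+1}. \<pi> i \<ge> 0" and large: "\<pi> k = 0" "\<pi> (k+1) = 0"
    and "(\<Sum>i\<in>{..k+1} - {k, 1}. \<pi> i) \<le> 1" "(\<Sum>i\<in>{..k+1} - {k+1, 0}. \<pi> i) \<le> 1"
    and i: "i \<in> {..k+1}"
  shows "\<pi> i \<le> auction_price k i"
proof (cases "i < k")
  case True
  have "\<pi> i \<le> (\<Sum>i\<in>{..k+1}. \<pi> i)" using i nonneg by (intro member_le_sum) auto
  also have "\<dots> \<le> 2" using auction_utility_bound(1) assms by blast
  finally show ?thesis using True by (simp add: auction_price_def)
next
  case False
  with i have "i = k \<or> i = k+1" by auto
  with large k show ?thesis by (auto simp: auction_price_def)
qed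

text \<open>
  The core constraints of the three maximal packings \<open>{..<k}\<close>, \<open>{k, 1}\<close> and
  \<open>{k+1, 0}\<close> imply all others, because the slack of a packing only grows when a bidder
  is added (nobody's core utility exceeds its price).
\<close>

lemma auction_core_iff:
  fixes \<pi> :: "nat \<Rightarrow> real"
  assumes k: "2 \<le> k"
  shows "\<pi> \<in> core {..k+1} {..k} (auction_val k) \<longleftrightarrow>
    (\<forall>i. i \<notin> {..k+1} \<longrightarrow> \<pi> i = 0) \<and> (\<forall>i\<in>{..k+1}. \<pi> i \<ge> 0) \<and> \<pi> k = 0 \<and> \<pi> (k+1) = 0 \<and>
    (\<Sum>i\<in>{..k+1} - {k, 1}. \<pi> i) \<le> 1 \<and> (\<Sum>i\<in>{..k+1} - {k+1, 0}. \<pi> i) \<le> 1"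
    (is "_ \<longleftrightarrow> ?out \<and> ?nonneg \<and> ?large0 \<and> ?large1 \<and> ?block_k \<and> ?block_k1")
proof -
  let ?N = "{..k+1}" and ?c = "auction_price k"
  define slack where "slack T = sum ?c T + (\<Sum>i\<in>?N - T. \<pi> i)" for T
  have core: "\<pi> \<in> core ?N {..k} (auction_val k) \<longleftrightarrow> ?out \<and> ?nonneg \<and>
      (\<forall>T\<subseteq>?N. feasible_alloc {..k} T (auction_bundle k) \<longrightarrow> slack T \<le> 2 * real k)"
    using core_single_minded_iff[of ?N "{..k}" ?c \<pi> "auction_bundle k"] auction_price_nonneg[OF k]
      auction_wval[OF k] unfolding auction_val_def slack_def by simp
  have maximal_sub: "T' \<subseteq> ?N" if "T' \<in> {{..<k}, {k, 1}, {k+1, 0}}" for T'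
    using that k by (auto simp: subset_eq)
  have "?N - {..<k} = {k, k+1}" by auto
  then have slack_max: "slack {..<k} = 2 * real k + \<pi> k + \<pi> (k+1)"
    "slack {k, 1} = 2 * real k - 1 + (\<Sum>i\<in>?N - {k, 1}. \<pi> i)"
    "slack {k+1, 0} = 2 * real k - 1 + (\<Sum>i\<in>?N - {k+1, 0}. \<pi> i)"
    unfolding slack_def auction_maximal_prices[OF k] by simp_all
  show ?thesis
  proof
    assume "\<pi> \<in> core ?N {..k} (auction_val k)"
    then have out: ?out and nonneg: ?nonneg
      and packings: "\<And>T. T \<subseteq> ?N \<Longrightarrow> feasible_alloc {..k} T (auction_bundle k) \<Longrightarrow> slack T \<le> 2 * real k"
      using core by blast+
    have "slack {..<k} \<le> 2 * real k" "slack {k, 1} \<le> 2 * real k" "slack {k+1, 0} \<le> 2 * real k"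
      using packings[OF _ auction_maximal_packings(1)[OF k]]
        packings[OF _ auction_maximal_packings(2)[OF k]]
        packings[OF _ auction_maximal_packings(3)[OF k]] maximal_sub by auto
    moreover have "\<pi> k \<ge> 0" "\<pi> (k+1) \<ge> 0" using nonneg by auto
    ultimately have ?large0 ?large1 ?block_k ?block_k1
      using slack_max by linarith+
    with out nonneg show "?out \<and> ?nonneg \<and> ?large0 \<and> ?large1 \<and> ?block_k \<and> ?block_k1" by blast
  next
    assume rhs: "?out \<and> ?nonneg \<and> ?large0 \<and> ?large1 \<and> ?block_k \<and> ?block_k1"
    then have slack_mono: "slack T \<le> slack T'" if "T \<subseteq> T'" "T' \<subseteq> ?N" for T T'
      unfolding slack_def using that auction_utility_le_price[OF k, of \<pi>]
      by (intro packing_slack_mono) auto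
    have "slack T \<le> 2 * real k" if T: "T \<subseteq> ?N" "feasible_alloc {..k} T (auction_bundle k)" for T
    proof -
      from auction_packing_cases[OF k T] obtain T' where
        "T \<subseteq> T'" "T' \<in> {{..<k}, {k, 1}, {k+1, 0}}" by blast
      moreover have "slack T' \<le> 2 * real k" if "T' \<in> {{..<k}, {k, 1}, {k+1, 0}}" for T'
        using that slack_max rhs by (elim insertE emptyE) simp_all
      ultimately show ?thesis using slack_mono maximal_sub by (meson order.trans)
    qed
    with rhs core show "\<pi> \<in> core ?N {..k} (auction_val k)" by blast
  qed
qed

lemma auction_core_indicator:
  fixes t :: real
  assumes k: "2 \<le> k" and A: "A \<subseteq> {..<k}" and t: "t \<ge> 0"
    and "t * card (({..k+1} - {k, 1}) \<inter> A) \<le> 1" "t * card (({..k+1} - {k+1, 0}) \<inter> A) \<le> 1"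
  shows "(\<lambda>i. t * indicator A i) \<in> core {..k+1} {..k} (auction_val k)"
proof -
  have "(\<Sum>i\<in>X. t * indicator A i) = t * card (X \<inter> A)" if "finite X" for X
    using that by simp
  moreover have "k \<notin> A" "k+1 \<notin> A" "\<And>i. i \<notin> {..k+1} \<Longrightarrow> i \<notin> A" using A by auto
  ultimately show ?thesis
    unfolding auction_core_iff[OF k] using assms by (simp add: mult.commute)
qed

lemma auction_indicator_01_in_core:
  assumes k: "2 \<le> k"
  shows "indicator {0, 1} \<in> core {..k+1} {..k} (auction_val k)"
proof -
  have "(\<lambda>i. 1 * indicator {0, 1} i) \<in> core {..k+1} {..k} (auction_val k)"
  proof (rule auction_core_indicator[OF k])
    have "({..k+1} - {k, 1}) \<inter> {0, 1} = {0}" "({..k+1} - {k+1, 0}) \<inter> {0, 1} = {1}" using k by auto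
    then show "1 * real (card (({..k+1} - {k, 1}) \<inter> {0, 1})) \<le> 1"
      "1 * real (card (({..k+1} - {k+1, 0}) \<inter> {0, 1})) \<le> 1" by simp_all
  qed (use k in auto)
  then show ?thesis by simp
qed

lemma auction_is_MRC_iff:
  fixes \<pi> :: "nat \<Rightarrow> real"
  assumes k: "2 \<le> k"
  shows "is_MRC {..k+1} {..k} (auction_val k) \<pi> \<longleftrightarrow> \<pi> = indicator {0, 1}"
proof -
  let ?N = "{..k+1}" and ?U = "core {..k+1} {..k} (auction_val k)"
  have "?N \<inter> {0, 1} = {0, 1}" by auto
  then have mrc_total: "(\<Sum>i\<in>?N. indicator {0, 1} i) = (2::real)"
    using sum_mult_indicator[of ?N "\<lambda>_. 1::real" "{0, 1}"] by simp
  have total_le: "(\<Sum>i\<in>?N. \<pi>' i) \<le> 2" if "\<pi>' \<in> ?U" for \<pi>'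
    using that auction_utility_bound(1)[OF k, of \<pi>'] unfolding auction_core_iff[OF k] by blast
  have total_eq: "\<pi>' = indicator {0, 1}" if "\<pi>' \<in> ?U" "(\<Sum>i\<in>?N. \<pi>' i) \<ge> 2" for \<pi>'
  proof
    fix i
    show "\<pi>' i = indicator {0, 1} i"
      using that auction_utility_bound(2)[OF k, of \<pi>' i] unfolding auction_core_iff[OF k]
      by (cases "i \<in> ?N") auto
  qed
  show ?thesis
  proof
    assume "is_MRC ?N {..k} (auction_val k) \<pi>"
    then have "\<pi> \<in> ?U" "(\<Sum>i\<in>?N. indicator {0, 1} i) \<le> (\<Sum>i\<in>?N. \<pi> i)"
      using auction_indicator_01_in_core[OF k] unfolding is_MRC_def by auto
    with mrc_total total_eq show "\<pi> = indicator {0, 1}" by simp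
  next
    assume "\<pi> = indicator {0, 1}"
    with auction_indicator_01_in_core[OF k] mrc_total total_le
    show "is_MRC ?N {..k} (auction_val k) \<pi>"
      unfolding is_MRC_def by simp
  qed
qed

lemma auction_efficient:
  assumes k: "2 \<le> k"
  shows "efficient_alloc {..k+1} {..k} (auction_val k) (\<lambda>i. if i < k then {i} else {})"
proof -
  have "{..k+1} - {k, k+1} = {..<k}" by auto
  moreover have "\<not> {..k} \<subseteq> {0}" "\<not> {..k} \<subseteq> {1}"
    using k by (auto simp: subset_eq intro!: exI[of _ k])
  ultimately have "(\<Sum>i\<in>{..k+1}. auction_val k i (if i < k then {i} else {})) = 2 * real k"
    using sum_remove_two[of "{..k+1}" k "k+1" "\<lambda>i. auction_val k i (if i < k then {i} else {})"] k
    by (simp add: auction_val_def single_minded_def auction_bundle_def auction_price_def)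
  then show ?thesis
    unfolding efficient_alloc_def feasible_alloc_def using auction_wval[OF k] by auto
qed

lemma auction_is_valuation:
  assumes k: "2 \<le> k"
  shows "is_valuation {..k+1} {..k} (auction_val k)"
proof -
  have "auction_bundle k i \<noteq> {}" for i
  proof (cases "i < k")
    case False
    then have "k \<in> auction_bundle k i" using k by (simp add: auction_bundle_def)
    then show ?thesis by blast
  qed (simp add: auction_bundle_def)
  then show ?thesis
    unfolding is_valuation_def auction_val_def single_minded_def
    using auction_price_nonneg[OF k] by auto
qed

lemma auction_core_positive_at:
  assumes k: "2 \<le> k" and i: "2 \<le> i" "i < k"
  shows "(\<lambda>j. 1/2 * indicator {0, 1, i} j) \<in> core {..k+1} {..k} (auction_val k)"
proof -
  have "({..k+1} - {k, 1}) \<inter> {0, 1, i} = {0, i}" "({..k+1} - {k+1, 0}) \<inter> {0, 1, i} = {1, i}"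
    using i by auto
  then show ?thesis
    using i by (intro auction_core_indicator[OF k]) auto
qed

theorem lemma1:
  fixes k :: nat
  assumes "k \<ge> 2"
  shows "\<exists>N M v a. finite N \<and> finite M \<and> is_valuation N M v \<and> efficient_alloc N M v a \<and>
           card (winners N a) = k \<and> (\<exists>!\<pi>. is_MRC N M v \<pi>) \<and>
           (\<forall>\<pi>. is_MRC N M v \<pi> \<longrightarrow>
              card {i\<in>winners N a. \<pi> i = 0} = k - 2 \<and>
              (\<forall>i\<in>winners N a. \<pi> i = 0 \<longrightarrow> (\<exists>\<pi>'\<in>core N M v. \<pi>' i > 0)))"
proof -
  let ?a = "\<lambda>i. if i < k then {i} else {}"
  have winners: "winners {..k+1} ?a = {..<k}" unfolding winners_def by auto
  have zeros: "{i\<in>{..<k}. indicator {0, 1} i = (0::real)} = {2..<k}"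
    by (auto simp: indicator_def)
  have "card {i\<in>winners {..k+1} ?a. \<pi> i = 0} = k - 2 \<and>
      (\<forall>i\<in>winners {..k+1} ?a. \<pi> i = 0 \<longrightarrow> (\<exists>\<pi>'\<in>core {..k+1} {..k} (auction_val k). \<pi>' i > 0))"
    if "is_MRC {..k+1} {..k} (auction_val k) \<pi>" for \<pi>
  proof -
    have \<pi>: "\<pi> = indicator {0, 1}" using that auction_is_MRC_iff[OF assms] by blast
    have "\<exists>\<pi>'\<in>core {..k+1} {..k} (auction_val k). \<pi>' i > 0" if "2 \<le> i" "i < k" for i
      using auction_core_positive_at[OF assms that] by (rule bexI[rotated]) simp
    then show ?thesis
      unfolding \<pi> winners zeros by (auto simp: indicator_def)
  qed
  moreover have "\<exists>!\<pi>. is_MRC {..k+1} {..k} (auction_val k) \<pi>"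
    using auction_is_MRC_iff[OF assms] by auto
  ultimately show ?thesis
    using auction_is_valuation[OF assms] auction_efficient[OF assms] winners
    by (intro exI[of _ "{..k+1}"] exI[of _ "{..k}"] exI[of _ "auction_val k"] exI[of _ ?a]) simp
qed

end
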